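(* Let $\rho$ be a simplicial representation of a right-angled Coxeter system $(C,S)$ with Vinberg domain $\Omega_{\mathrm{Vin}}$. If $W_1,\dots,W_n$ is an efficient itinerary of walls in $\Omega_{\mathrm{Vin}}$ with first wall $W_1$ and last wall $W_n$, then $\overline{W_1}\cap\overline{W_n}=\bigcap_{i=1}^n\overline{W_i}$.
   Context: $S=\{s_1,\dots,s_n\}$, $V=\mathbb{R}^{|S|}$. Simplicial representation: $\rho(s_i)=\mathrm{id}-v_i\otimes\alpha_i$, $\alpha_i=e^i$, $v_i=\sum_kA_{ki}e_k$, $A$ a Cartan matrix ($A_{ii}=2$; $A_{ij}=0$ if $s_i,s_j$ commute; $A_{ij}<0$, $A_{ij}A_{ji}\ge4$ otherwise). $\Omega_{\mathrm{Vin}}$ is the projectivization of the interior of $\bigcup_{\gamma}\rho(\gamma)\{x:\alpha_i(x)\le0\ \forall i\}$. Walls in $\Omega_{\mathrm{Vin}}$: fixed sets in $\Omega_{\mathrm{Vin}}$ of $\rho(r)$, $r$ a reflection (conjugate of a generator); closures in $\mathbb{P}(V)$. Via the correspondence with Davis-complex walls (the wall of $r$ is the set of edges $\{g,gs\}$ of $\mathrm{Cay}(C,S)$ with $gsg^{-1}=r$), an itinerary is a sequence of walls with edges $e_i\in W_i$ forming a geodesic edge path in $\mathrm{Cay}(C,S)$; it is efficient if every wall other than the first and last is disjoint (as a Davis-complex hyperplane) from the first and the last. *)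

theory Defs
  imports "HOL-Analysis.Analysis"
begin

(* Generators S are indexed by a finite type 'n; V = real^'n.
   E s t : s and t commute (the defining graph of the right-angled Coxeter system). *)

definition racg_graph :: "('n \<Rightarrow> 'n \<Rightarrow> bool) \<Rightarrow> bool" where
  "racg_graph E \<longleftrightarrow> (\<forall>s t. E s t \<longrightarrow> E t s) \<and> (\<forall>s. \<not> E s s)"

inductive cox_step :: "('n \<Rightarrow> 'n \<Rightarrow> bool) \<Rightarrow> 'n list \<Rightarrow> 'n list \<Rightarrow> bool"
  for E where
  cancel: "cox_step E (u @ [s, s] @ v) (u @ v)"
| swap: "E s t \<Longrightarrow> cox_step E (u @ [s, t] @ v) (u @ [t, s] @ v)"

(* equality in the right-angled Coxeter group C, on words *)
definition ceq :: "('n \<Rightarrow> 'n \<Rightarrow> bool) \<Rightarrow> 'n list \<Rightarrow> 'n list \<Rightarrow> bool" where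
  "ceq E u v \<longleftrightarrow> (u, v) \<in> ({(x, y). cox_step E x y} \<union> {(x, y). cox_step E y x})\<^sup>*"

definition cox_len :: "('n \<Rightarrow> 'n \<Rightarrow> bool) \<Rightarrow> 'n list \<Rightarrow> nat" where
  "cox_len E w = (LEAST k. \<exists>u. length u = k \<and> ceq E u w)"

definition is_reflection :: "('n \<Rightarrow> 'n \<Rightarrow> bool) \<Rightarrow> 'n list \<Rightarrow> bool" where
  "is_reflection E r \<longleftrightarrow> (\<exists>g s. ceq E r (g @ [s] @ rev g))"

(* the edge {g, g s} of Cay(C,S) lies in the Davis-complex wall of the reflection r *)
definition edge_in_wall :: "('n \<Rightarrow> 'n \<Rightarrow> bool) \<Rightarrow> 'n list \<Rightarrow> 'n \<Rightarrow> 'n list \<Rightarrow> bool" where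
  "edge_in_wall E g s r \<longleftrightarrow> ceq E (g @ [s] @ rev g) r"

(* Davis-complex hyperplanes of r and r' intersect (the Davis complex of a right-angled
   Coxeter group is a CAT(0) cube complex; two hyperplanes meet iff they cross in a square
   with vertices g, gs, gt, gst, s \<noteq> t commuting) *)
definition walls_cross :: "('n \<Rightarrow> 'n \<Rightarrow> bool) \<Rightarrow> 'n list \<Rightarrow> 'n list \<Rightarrow> bool" where
  "walls_cross E r r' \<longleftrightarrow> (\<exists>g s t. s \<noteq> t \<and> E s t \<and> edge_in_wall E g s r \<and> edge_in_wall E g t r')"

definition walls_disjoint :: "('n \<Rightarrow> 'n \<Rightarrow> bool) \<Rightarrow> 'n list \<Rightarrow> 'n list \<Rightarrow> bool" where
  "walls_disjoint E r r' \<longleftrightarrow> \<not> ceq E r r' \<and> \<not> walls_cross E r r'"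

(* itinerary: reflections rs = [r_1,...,r_m] and vertices gs = [g_0,...,g_m] of Cay(C,S)
   with g_i = g_{i-1} s_i, the edge {g_{i-1}, g_i} in the wall of r_i, geodesic path *)
definition itinerary :: "('n \<Rightarrow> 'n \<Rightarrow> bool) \<Rightarrow> 'n list list \<Rightarrow> bool" where
  "itinerary E rs \<longleftrightarrow> rs \<noteq> [] \<and> (\<forall>r\<in>set rs. is_reflection E r) \<and>
     (\<exists>gs ss. length gs = Suc (length rs) \<and> length ss = length rs \<and>
        (\<forall>i < length rs. ceq E (gs ! Suc i) (gs ! i @ [ss ! i]) \<and>
                         edge_in_wall E (gs ! i) (ss ! i) (rs ! i)) \<and>
        cox_len E (rev (gs ! 0) @ gs ! length rs) = length rs)"

definition efficient_itinerary :: "('n \<Rightarrow> 'n \<Rightarrow> bool) \<Rightarrow> 'n list list \<Rightarrow> bool" where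
  "efficient_itinerary E rs \<longleftrightarrow> itinerary E rs \<and>
     (\<forall>i. 0 < i \<and> i < length rs - 1 \<longrightarrow>
        walls_disjoint E (rs ! i) (hd rs) \<and> walls_disjoint E (rs ! i) (last rs))"

definition cartan_racg :: "('n \<Rightarrow> 'n \<Rightarrow> bool) \<Rightarrow> real^'n^'n \<Rightarrow> bool" where
  "cartan_racg E A \<longleftrightarrow> (\<forall>i. A$i$i = 2) \<and>
     (\<forall>i j. i \<noteq> j \<longrightarrow> (if E i j then A$i$j = 0 else A$i$j < 0 \<and> A$i$j * A$j$i \<ge> 4))"

(* rho(s_i) = id - v_i \<otimes> alpha_i, alpha_i = e^i, v_i = sum_k A_ki e_k *)
definition rho_gen :: "real^'n^'n \<Rightarrow> 'n \<Rightarrow> real^'n \<Rightarrow> real^'n" where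
  "rho_gen A i x = x - (x$i) *\<^sub>R (\<chi> k. A$k$i)"

fun rho_word :: "real^'n^'n \<Rightarrow> 'n list \<Rightarrow> real^'n \<Rightarrow> real^'n" where
  "rho_word A [] = id"
| "rho_word A (s # w) = rho_gen A s \<circ> rho_word A w"

(* Subsets of P(V) are represented by their cones in V - {0}. *)
definition fund_chamber :: "(real^'n) set" where
  "fund_chamber = {x. \<forall>i. x$i \<le> 0}"

definition vinberg_cone :: "real^'n^'n \<Rightarrow> (real^'n) set" where
  "vinberg_cone A = interior (\<Union>w. rho_word A w ` fund_chamber) - {0}"

(* cone over the wall of rho(r): projective fixed points of rho(r) in Omega_Vin *)
definition omega_wall :: "real^'n^'n \<Rightarrow> 'n list \<Rightarrow> (real^'n) set" where
  "omega_wall A r = {x \<in> vinberg_cone A. \<exists>c::real. rho_word A r x = c *\<^sub>R x}"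

(* cone over the closure in P(V) of a set given by its cone *)
definition proj_closure :: "(real^'n) set \<Rightarrow> (real^'n) set" where
  "proj_closure X = closure X - {0}"

end

theory Submission
  imports Defs
begin

text \<open>
  A wall \<open>W\<close> of the reflection \<open>g s g\<inverse>\<close> lies in the kernel of the root \<open>\<beta> = g \<alpha>\<^sub>s\<close>.
  Tits' lemma (a root \<open>w \<alpha>\<^sub>s\<close> is nonnegative when \<open>\<ell>(w s) > \<ell>(w)\<close>) shows that a vector lies in the
  Tits cone iff only finitely many positive roots are positive on it; so the cone is convex
  and \<open>\<rho>\<close>-invariant, and the vanishing coordinates of an interior point of the closed
  fundamental chamber pairwise commute.  Hence two disjoint walls have root hyperplanes that
  do not meet in \<open>\<Omega>\<^sub>V\<^sub>i\<^sub>n\<close>.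

  Let \<open>W\<^sub>i\<close> be a middle wall of an efficient itinerary.  Then \<open>0 \<notin> \<Omega>\<^sub>V\<^sub>i\<^sub>n\<close>, each wall is the part
  of the convex cone \<open>\<Omega>\<^sub>V\<^sub>i\<^sub>n\<close> on its root hyperplane, and \<open>\<beta>\<^sub>i\<close> cannot change sign along \<open>W\<^sub>1\<close> or
  along \<open>W\<^sub>n\<close>.  Evaluating \<open>\<beta>\<^sub>i\<close> on a face of the first and of the last chamber of the gallery,
  Tits' lemma gives \<open>\<beta>\<^sub>i \<le> 0\<close> on \<open>W\<^sub>1\<close> and \<open>\<beta>\<^sub>i \<ge> 0\<close> on \<open>W\<^sub>n\<close>.  So every segment from \<open>W\<^sub>1\<close> to \<open>W\<^sub>n\<close>
  crosses \<open>W\<^sub>i\<close>, and letting its endpoints converge gives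
  \<open>closure W\<^sub>1 \<inter> closure W\<^sub>n \<subseteq> closure W\<^sub>i\<close>.
\<close>

section \<open>Words in a right-angled Coxeter group\<close>

lemma cox_step_context: "cox_step E u v \<Longrightarrow> cox_step E (p @ u @ q) (p @ v @ q)"
proof (induction rule: cox_step.induct)
  case (cancel u s v)
  show ?case using cox_step.cancel[of E "p @ u" s "v @ q"] by simp
next
  case (swap s t u v)
  show ?case
    using cox_step.swap[where E = E and s = s and t = t and u = "p @ u" and v = "v @ q", OF swap.hyps]
    by simp
qed

lemma ceq_refl [simp]: "ceq E u u"
  unfolding ceq_def by simp

lemma ceq_trans [trans]: "ceq E u v \<Longrightarrow> ceq E v w \<Longrightarrow> ceq E u w"
  unfolding ceq_def by (rule rtrancl_trans)

lemma ceq_sym: "ceq E u v \<Longrightarrow> ceq E v u"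
  unfolding ceq_def
proof (induction rule: rtrancl_induct)
  case (step y z)
  then show ?case by (auto intro: converse_rtrancl_into_rtrancl)
qed simp

lemma cox_step_imp_ceq: "cox_step E u v \<Longrightarrow> ceq E u v"
  unfolding ceq_def by auto

lemma ceq_map:
  assumes "\<And>x y. cox_step E x y \<Longrightarrow> cox_step E (f x) (f y)" and "ceq E u v"
  shows "ceq E (f u) (f v)"
  using assms(2) unfolding ceq_def
proof (induction rule: rtrancl_induct)
  case (step y z)
  then show ?case using assms(1) by (auto intro: rtrancl_into_rtrancl)
qed simp

lemma ceq_invariant:
  assumes "\<And>x y. cox_step E x y \<Longrightarrow> f x = f y" and "ceq E u v"
  shows "f u = f v"
  using assms(2) unfolding ceq_def
  by (induction rule: rtrancl_induct) (auto dest: assms(1))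

lemma ceq_context: "ceq E u v \<Longrightarrow> ceq E (p @ u @ q) (p @ v @ q)"
  by (rule ceq_map[OF cox_step_context])

lemma ceq_append: "ceq E u u' \<Longrightarrow> ceq E v v' \<Longrightarrow> ceq E (u @ v) (u' @ v')"
  using ceq_context[of E u u' "[]" v] ceq_context[of E v v' u' "[]"] by (auto intro: ceq_trans)

lemma ceq_cancel: "ceq E (u @ [s, s] @ v) (u @ v)"
  by (rule cox_step_imp_ceq) (rule cox_step.cancel)

lemma ceq_swap: "E s t \<Longrightarrow> ceq E (u @ [s, t] @ v) (u @ [t, s] @ v)"
  by (rule cox_step_imp_ceq) (rule cox_step.swap)

lemma ceq_snoc_snoc: "ceq E (u @ [s, s]) u"
  using ceq_cancel[of E u s "[]"] by simp

lemma ceq_rev_append_self: "ceq E (rev w @ w) []"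
proof (induction w)
  case (Cons a w)
  have "ceq E (rev w @ [a, a] @ w) (rev w @ w)" by (rule ceq_cancel)
  then show ?case using Cons by (auto intro: ceq_trans)
qed simp

lemma ceq_append_rev_self: "ceq E (w @ rev w) []"
  using ceq_rev_append_self[of E "rev w"] by simp

lemma ceq_conjugate: "ceq E (rev h @ x @ h) y \<Longrightarrow> ceq E (h @ y @ rev h) x"
proof -
  assume "ceq E (rev h @ x @ h) y"
  then have "ceq E (h @ y @ rev h) ((h @ rev h) @ x @ (h @ rev h))"
    using ceq_context[OF ceq_sym, of E "rev h @ x @ h" y h "rev h"] by simp
  also have "ceq E ((h @ rev h) @ x @ (h @ rev h)) ([] @ x @ [])"
    by (intro ceq_append ceq_append_rev_self ceq_refl)
  finally show ?thesis by simp
qed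

lemma ceq_even_length: "ceq E u v \<Longrightarrow> even (length u) = even (length v)"
  by (rule ceq_invariant[where E = E and f = "\<lambda>w. even (length w)"]) (auto elim: cox_step.cases)

lemma cox_len_witness: "\<exists>u. length u = cox_len E w \<and> ceq E u w"
  unfolding cox_len_def by (rule LeastI[of _ "length w"]) auto

lemma cox_len_le: "ceq E u w \<Longrightarrow> cox_len E w \<le> length u"
  unfolding cox_len_def by (rule Least_le) auto

lemma cox_len_le_length: "cox_len E w \<le> length w"
  by (rule cox_len_le) simp

lemma cox_len_ceq: "ceq E u w \<Longrightarrow> cox_len E u = cox_len E w"
proof -
  assume uw: "ceq E u w"
  obtain x y where "length x = cox_len E u" "ceq E x u" "length y = cox_len E w" "ceq E y w"
    using cox_len_witness by metis
  then show ?thesis using uw cox_len_le[of E x w] cox_len_le[of E y u]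
    by (metis ceq_sym ceq_trans le_antisym)
qed

lemma even_cox_len: "even (cox_len E w) = even (length w)"
  using cox_len_witness[of E w] ceq_even_length by metis

lemma cox_len_append: "cox_len E (u @ v) \<le> cox_len E u + cox_len E v"
proof -
  obtain x y where "length x = cox_len E u" "ceq E x u" "length y = cox_len E v" "ceq E y v"
    using cox_len_witness by metis
  then show ?thesis using ceq_append cox_len_le by fastforce
qed

lemma cox_len_ceq_append_le: "ceq E w (v @ u) \<Longrightarrow> cox_len E w \<le> cox_len E v + length u"
  using cox_len_ceq cox_len_append cox_len_le_length by (metis add_left_mono order_trans)

lemma cox_len_snoc:
  "cox_len E (w @ [s]) = Suc (cox_len E w) \<or> cox_len E w = Suc (cox_len E (w @ [s]))"
proof -
  have "cox_len E (w @ [s]) \<le> Suc (cox_len E w)"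
    using cox_len_ceq_append_le[of E "w @ [s]" w "[s]"] by simp
  moreover have "cox_len E w \<le> Suc (cox_len E (w @ [s]))"
    using cox_len_ceq_append_le[of E w "w @ [s]" "[s]"] ceq_sym[OF ceq_snoc_snoc[of E w s]] by simp
  moreover have "even (cox_len E (w @ [s])) \<noteq> even (cox_len E w)"
    by (simp add: even_cox_len)
  ultimately show ?thesis by (metis le_SucE le_antisym)
qed

lemma ceq_Nil_if_cox_len_0: "cox_len E w = 0 \<Longrightarrow> ceq E [] w"
  using cox_len_witness[of E w] by auto

lemma exists_descent:
  assumes "cox_len E w \<noteq> 0"
  obtains t where "cox_len E (w @ [t]) < cox_len E w"
proof -
  obtain u where u: "length u = cox_len E w" "ceq E u w" using cox_len_witness by blast
  then obtain v t where "u = v @ [t]" using assms by (cases u rule: rev_exhaust) auto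
  then have wt: "ceq E (w @ [t]) v"
    using ceq_append[OF ceq_sym[OF u(2)] ceq_refl[of E "[t]"]] ceq_snoc_snoc[of E v t]
    by (auto intro: ceq_trans)
  then have "cox_len E (w @ [t]) < cox_len E w"
    using cox_len_le[OF ceq_sym[OF wt]] u \<open>u = v @ [t]\<close> by simp
  then show thesis by (rule that)
qed

lemma ceq_Nil_if_no_descent:
  assumes "\<And>s. cox_len E w < cox_len E (w @ [s])"
  shows "ceq E [] w"
  using assms exists_descent ceq_Nil_if_cox_len_0 by (metis less_asym)

definition reduced :: "('n \<Rightarrow> 'n \<Rightarrow> bool) \<Rightarrow> 'n list \<Rightarrow> bool" where
  "reduced E w \<longleftrightarrow> cox_len E w = length w"

lemma reduced_appendD:
  assumes "reduced E (u @ v)"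
  shows "reduced E u" "reduced E v"
proof -
  have "cox_len E (u @ v) \<le> cox_len E u + length v" "cox_len E (u @ v) \<le> length u + cox_len E v"
    using cox_len_append[of E u v] cox_len_le_length[of E u] cox_len_le_length[of E v] by linarith+
  then show "reduced E u" "reduced E v"
    using assms cox_len_le_length[of E u] cox_len_le_length[of E v] unfolding reduced_def by auto
qed

lemma reduced_not_ceq_shorter: "reduced E w \<Longrightarrow> ceq E v w \<Longrightarrow> length w \<le> length v"
  unfolding reduced_def by (metis cox_len_le)

lemma not_successively_neq_split:
  "\<not> successively (\<noteq>) w \<Longrightarrow> \<exists>p c q. w = p @ [c, c] @ q"
proof (induction w)
  case (Cons x xs)
  show ?case
  proof (cases "xs \<noteq> [] \<and> hd xs = x")
    case True
    then show ?thesis by (metis append_Cons append_Nil list.collapse)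
  next
    case False
    then have "\<not> successively (\<noteq>) xs" using Cons.prems by (cases xs) auto
    then show ?thesis using Cons.IH by (metis append_Cons)
  qed
qed simp

lemma reduced_successively:
  assumes "reduced E w"
  shows "successively (\<noteq>) w"
proof (rule ccontr)
  assume "\<not> successively (\<noteq>) w"
  then obtain p c q where "w = p @ [c, c] @ q" using not_successively_neq_split by blast
  then show False
    using assms reduced_not_ceq_shorter[of E w "p @ q"] ceq_sym[OF ceq_cancel[of E p c q]] by simp
qed

fun alternating_word :: "'n \<Rightarrow> 'n \<Rightarrow> nat \<Rightarrow> 'n list" where
  "alternating_word s t 0 = []"
| "alternating_word s t (Suc k) = (if even k then s else t) # alternating_word s t k"

lemma set_alternating_word: "set (alternating_word s t k) \<subseteq> {s, t}"
  by (induction k) auto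

lemma successively_alternating_word: "s \<noteq> t \<Longrightarrow> successively (\<noteq>) (alternating_word s t k)"
proof (induction k)
  case (Suc k)
  then show ?case by (cases k) (auto simp: successively_Cons)
qed simp

section \<open>Vectors, half-spaces and segments\<close>

lemma inner_axis_one [simp]: "f \<bullet> axis i (1::real) = f $ i" "axis i (1::real) \<bullet> f = f $ i"
  by (simp_all add: inner_axis inner_axis')

lemma axis_component: "axis i x $ j = (if j = i then x else 0)"
  by (simp add: axis_def)

lemma inner_vec_sum: "f \<bullet> (x::real^'n) = (\<Sum>i\<in>UNIV. f$i * x$i)"
  by (simp add: inner_vec_def)

lemma vec_eq_if_inner_eq: "(\<And>x. f \<bullet> x = g \<bullet> (x::real^'n)) \<Longrightarrow> f = g"
  by (metis inner_axis_one(1) vec_eq_iff)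

lemma mem_fund_chamber: "x \<in> fund_chamber \<longleftrightarrow> x \<le> 0"
  by (simp add: fund_chamber_def less_eq_vec_def)

lemma inner_nonneg_nonpos_vec: "0 \<le> f \<Longrightarrow> x \<le> 0 \<Longrightarrow> f \<bullet> (x::real^'n) \<le> 0"
  unfolding inner_vec_sum less_eq_vec_def by (auto intro!: sum_nonpos mult_nonneg_nonpos)

lemma inner_nonpos_nonpos_vec: "f \<le> 0 \<Longrightarrow> x \<le> 0 \<Longrightarrow> 0 \<le> f \<bullet> (x::real^'n)"
  unfolding inner_vec_sum less_eq_vec_def by (auto intro!: sum_nonneg mult_nonpos_nonpos)

lemma inner_nonneg_nonpos_eq_0_component:
  assumes "0 \<le> f" "x \<le> 0" "f \<bullet> x = 0"
  shows "f$k * x$k = (0::real)"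
proof -
  have "\<forall>i\<in>UNIV. f$i * x$i \<le> 0"
    using assms(1,2) by (auto simp: less_eq_vec_def intro: mult_nonneg_nonpos)
  moreover have "(\<Sum>i\<in>UNIV. - (f$i * x$i)) = 0" using assms(3) by (simp add: inner_vec_sum sum_negf)
  ultimately show ?thesis using sum_nonneg_eq_0_iff[of UNIV "\<lambda>i. - (f$i * x$i)"] by auto
qed

lemma sum_pos_if_nonneg_nonzero:
  assumes "0 \<le> f" "f \<noteq> (0::real^'n)"
  shows "0 < (\<Sum>i\<in>UNIV. f$i)"
proof -
  obtain i where "f$i \<noteq> 0" using assms(2) by (auto simp: vec_eq_iff)
  then have "0 < f$i" using assms(1) by (simp add: less_eq_vec_def order_less_le)
  moreover have "f$i \<le> (\<Sum>i\<in>UNIV. f$i)"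
    by (rule member_le_sum) (use assms(1) in \<open>auto simp: less_eq_vec_def\<close>)
  ultimately show ?thesis by linarith
qed

text \<open>The representative with coordinate sum 1 of the ray through \<open>0 \<le> f \<noteq> 0\<close>: proportional
  positive roots give the same wall, so walls are counted as rays.\<close>
definition normalized :: "real^'n \<Rightarrow> real^'n" where
  "normalized f = inverse (\<Sum>i\<in>UNIV. f$i) *\<^sub>R f"

lemma normalized_scaleR: "c \<noteq> 0 \<Longrightarrow> normalized (c *\<^sub>R f) = normalized f"
  unfolding normalized_def by (simp add: sum_distrib_left[symmetric])

lemma normalized_axis [simp]: "normalized (axis s 1) = axis s 1"
proof -
  have "(\<Sum>i\<in>UNIV. axis s (1::real) $ i) = 1" by (simp add: axis_def)
  then show ?thesis unfolding normalized_def by simp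
qed

definition face_point :: "'n \<Rightarrow> real^'n" where
  "face_point s = (\<chi> k. if k = s then 0 else -1)"

lemma face_point_nonpos: "face_point s \<le> 0"
  by (simp add: face_point_def less_eq_vec_def)

lemma hyperplane_crosses_segment:
  fixes \<gamma> :: "'a::real_inner"
  assumes "convex K" "y \<in> K" "z \<in> K" "\<gamma> \<bullet> y \<le> 0" "0 \<le> \<gamma> \<bullet> z"
  shows "\<exists>w\<in>K \<inter> closed_segment y z. \<gamma> \<bullet> w = 0"
proof -
  have "closed_segment y z \<subseteq> K" by (rule closed_segment_subset[OF assms(2,3,1)])
  moreover obtain w where "w \<in> closed_segment y z" "\<gamma> \<bullet> w = 0"
    using connected_ivt_hyperplane[of "closed_segment y z" y z \<gamma> 0] assms(4,5) by auto
  ultimately show ?thesis by blast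
qed

lemma inner_sign_persists_in_hyperplane:
  fixes \<beta> \<gamma> :: "'a::real_inner"
  assumes "convex K" "p \<in> K" "y \<in> K" "\<beta> \<bullet> p = 0" "\<beta> \<bullet> y = 0" "\<gamma> \<bullet> p \<le> 0"
    and "\<And>w. w \<in> K \<Longrightarrow> \<beta> \<bullet> w = 0 \<Longrightarrow> \<gamma> \<bullet> w \<noteq> 0"
  shows "\<gamma> \<bullet> y \<le> 0"
proof (rule ccontr)
  assume "\<not> \<gamma> \<bullet> y \<le> 0"
  moreover have "convex (K \<inter> {w. \<beta> \<bullet> w = 0})" by (intro convex_Int assms(1) convex_hyperplane)
  ultimately obtain w where "w \<in> K" "\<beta> \<bullet> w = 0" "\<gamma> \<bullet> w = 0"
    using hyperplane_crosses_segment[of "K \<inter> {w. \<beta> \<bullet> w = 0}" p y \<gamma>] assms(2-6) by auto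
  then show False using assms(7) by blast
qed

lemma closure_inter_subset_closure_hyperplane:
  fixes \<gamma> :: "'a::real_inner"
  assumes "convex K" "P \<subseteq> K" "Q \<subseteq> K" "\<And>y. y \<in> P \<Longrightarrow> \<gamma> \<bullet> y \<le> 0" "\<And>z. z \<in> Q \<Longrightarrow> 0 \<le> \<gamma> \<bullet> z"
  shows "closure P \<inter> closure Q \<subseteq> closure {w\<in>K. \<gamma> \<bullet> w = 0}"
proof
  fix x assume x: "x \<in> closure P \<inter> closure Q"
  show "x \<in> closure {w\<in>K. \<gamma> \<bullet> w = 0}"
    unfolding closure_approachable
  proof (intro allI impI)
    fix e :: real assume "0 < e"
    then obtain y z where "y \<in> P" "z \<in> Q" "y \<in> ball x e" "z \<in> ball x e"
      using x closure_approachable[of x P] closure_approachable[of x Q]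
      by (metis IntE dist_commute mem_ball)
    moreover have "convex (K \<inter> ball x e)" by (intro convex_Int assms(1) convex_ball)
    ultimately obtain w where "w \<in> K" "w \<in> ball x e" "\<gamma> \<bullet> w = 0"
      using hyperplane_crosses_segment[of "K \<inter> ball x e" y z \<gamma>] assms(2-5) by blast
    then show "\<exists>w\<in>{w\<in>K. \<gamma> \<bullet> w = 0}. dist w x < e" by (auto simp: dist_commute)
  qed
qed

section \<open>The representation and its dual\<close>

lemma rho_word_append: "rho_word A (u @ v) = rho_word A u \<circ> rho_word A v"
  by (induction u) auto

lemma rho_gen_component: "rho_gen A i x $ k = x$k - x$i * A$k$i"
  unfolding rho_gen_def by simp

lemma rho_gen_face_point [simp]: "rho_gen A s (face_point s) = face_point s"
  by (simp add: rho_gen_def face_point_def)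

lemma linear_rho_gen: "linear (rho_gen A i)"
  unfolding rho_gen_def by (intro linearI) (auto simp: algebra_simps)

lemma linear_rho_word: "linear (rho_word A w)"
proof (induction w)
  case (Cons a w)
  show ?case using linear_compose[OF Cons linear_rho_gen] by (simp add: o_def)
qed (simp add: linear_id[unfolded id_def])

definition rho_gen_dual :: "real^'n^'n \<Rightarrow> 'n \<Rightarrow> real^'n \<Rightarrow> real^'n" where
  "rho_gen_dual A i f = f - (f \<bullet> (\<chi> k. A$k$i)) *\<^sub>R axis i 1"

fun rho_word_dual :: "real^'n^'n \<Rightarrow> 'n list \<Rightarrow> real^'n \<Rightarrow> real^'n" where
  "rho_word_dual A [] f = f"
| "rho_word_dual A (a # u) f = rho_word_dual A u (rho_gen_dual A a f)"

lemma inner_rho_gen_dual: "rho_gen_dual A i f \<bullet> x = f \<bullet> rho_gen A i x"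
  unfolding rho_gen_dual_def rho_gen_def by (simp add: inner_diff_left inner_diff_right)

lemma inner_rho_word_dual: "rho_word_dual A u f \<bullet> x = f \<bullet> rho_word A u x"
  by (induction u arbitrary: f) (auto simp: inner_rho_gen_dual)

lemma rho_word_dual_append: "rho_word_dual A (u @ v) f = rho_word_dual A v (rho_word_dual A u f)"
  by (induction u arbitrary: f) auto

lemma rho_gen_dual_component:
  "rho_gen_dual A i f $ k = (if k = i then f$k - f \<bullet> (\<chi> k. A$k$i) else f$k)"
  unfolding rho_gen_dual_def by (auto simp: axis_def)

lemma linear_rho_word_dual: "linear (rho_word_dual A u)"
proof (rule linearI)
  show "rho_word_dual A u (f + g) = rho_word_dual A u f + rho_word_dual A u g" for f g
    by (rule vec_eq_if_inner_eq) (simp add: inner_rho_word_dual inner_add_left)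
  show "rho_word_dual A u (c *\<^sub>R f) = c *\<^sub>R rho_word_dual A u f" for c f
    by (rule vec_eq_if_inner_eq) (simp add: inner_rho_word_dual)
qed

locale right_angled_cartan =
  fixes E :: "'n::finite \<Rightarrow> 'n \<Rightarrow> bool" and A :: "real^'n^'n"
  assumes racg: "racg_graph E" and cartan: "cartan_racg E A"
begin

lemma commute_sym: "E s t \<Longrightarrow> E t s"
  using racg unfolding racg_graph_def by blast

lemma cartan_diag [simp]: "A$i$i = 2"
  using cartan unfolding cartan_racg_def by blast

lemma cartan_commute: "E i j \<Longrightarrow> A$i$j = 0"
  using cartan racg unfolding cartan_racg_def racg_graph_def by metis

lemma cartan_neg: "i \<noteq> j \<Longrightarrow> \<not> E i j \<Longrightarrow> A$i$j < 0"
  using cartan unfolding cartan_racg_def by metis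

lemma cartan_prod_ge: "i \<noteq> j \<Longrightarrow> \<not> E i j \<Longrightarrow> 4 \<le> A$i$j * A$j$i"
  using cartan unfolding cartan_racg_def by metis

lemma ceq_rev:
  assumes "ceq E u v"
  shows "ceq E (rev u) (rev v)"
proof (rule ceq_map[OF _ assms])
  show "cox_step E (rev x) (rev y)" if "cox_step E x y" for x y
    using that
  proof (induction rule: cox_step.induct)
    case (cancel u s v)
    show ?case using cox_step.cancel[of E "rev v" s "rev u"] by simp
  next
    case (swap s t u v)
    show ?case
      using cox_step.swap[where E = E and s = t and t = s and u = "rev v" and v = "rev u"]
        commute_sym[OF swap.hyps] by simp
  qed
qed

lemma cox_len_rev: "cox_len E (rev w) = cox_len E w"
proof -
  have "cox_len E (rev u) \<le> cox_len E u" for u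
    using cox_len_witness[of E u] ceq_rev cox_len_le by (metis length_rev)
  then show ?thesis by (metis antisym rev_rev_ident)
qed

lemma rho_gen_involutive [simp]: "rho_gen A i (rho_gen A i x) = x"
  by (simp add: vec_eq_iff rho_gen_component algebra_simps)

lemma rho_gen_commute: "E i j \<Longrightarrow> rho_gen A i (rho_gen A j x) = rho_gen A j (rho_gen A i x)"
  using cartan_commute[of i j] cartan_commute[of j i] commute_sym[of i j]
  by (simp add: vec_eq_iff rho_gen_component algebra_simps)

lemma rho_gen_dual_involutive [simp]: "rho_gen_dual A i (rho_gen_dual A i f) = f"
  by (rule vec_eq_if_inner_eq) (simp add: inner_rho_gen_dual)

lemma rho_gen_dual_axis_self [simp]: "rho_gen_dual A i (axis i 1) = - axis i 1"
  by (rule vec_eq_if_inner_eq) (simp add: inner_rho_gen_dual rho_gen_component)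

lemma rho_word_ceq:
  assumes "ceq E u v"
  shows "rho_word A u = rho_word A v"
proof (rule ceq_invariant[OF _ assms])
  show "rho_word A x = rho_word A y" if "cox_step E x y" for x y
    using that
  proof induction
    case (swap s t u v)
    then show ?case by (simp add: rho_word_append fun_eq_iff rho_gen_commute[OF swap.hyps])
  qed (simp add: rho_word_append fun_eq_iff)
qed

lemma rho_word_rev_inverse [simp]:
  "rho_word A (rev w) (rho_word A w x) = x" "rho_word A w (rho_word A (rev w) x) = x"
  using rho_word_ceq[OF ceq_rev_append_self[of E w]] rho_word_ceq[OF ceq_append_rev_self[of E w]]
  by (simp_all add: rho_word_append fun_eq_iff)

lemma bij_rho_word: "bij (rho_word A w)"
  by (rule bij_betw_byWitness[of _ "rho_word A (rev w)"]) auto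

text \<open>\<open>root w s\<close> is the root \<open>w \<alpha>\<^sub>s = \<alpha>\<^sub>s \<circ> \<rho>(w)\<inverse>\<close> of the reflection \<open>w s w\<inverse>\<close>.\<close>
definition root :: "'n list \<Rightarrow> 'n \<Rightarrow> real^'n" where
  "root w s = rho_word_dual A (rev w) (axis s 1)"

definition is_root :: "real^'n \<Rightarrow> bool" where
  "is_root f \<longleftrightarrow> (\<exists>w s. f = root w s)"

lemma root_Nil [simp]: "root [] s = axis s 1"
  by (simp add: root_def)

lemma root_append: "root (v @ w) s = rho_word_dual A (rev v) (root w s)"
  by (simp add: root_def rho_word_dual_append)

lemma inner_root: "root w s \<bullet> x = rho_word A (rev w) x $ s"
  by (simp add: root_def inner_rho_word_dual)

lemma root_ceq: "ceq E v w \<Longrightarrow> root v s = root w s"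
  by (rule vec_eq_if_inner_eq) (simp add: inner_root rho_word_ceq[OF ceq_rev])

lemma root_snoc_self: "root (w @ [s]) s = - root w s"
  by (rule vec_eq_if_inner_eq) (simp add: inner_root rho_word_append rho_gen_component)

lemma root_nonzero: "root w s \<noteq> 0"
proof -
  have "root w s \<bullet> rho_word A w (axis s 1) = 1" by (simp add: inner_root)
  then show ?thesis by auto
qed

section \<open>Tits' lemma\<close>

lemma rho_gen_dual_rank2:
  assumes "u \<noteq> v"
  shows "rho_gen_dual A v (p *\<^sub>R axis u 1 + q *\<^sub>R axis v 1)
       = p *\<^sub>R axis u 1 + (- A$u$v * p - q) *\<^sub>R axis v 1"
  using assms by (simp add: rho_gen_dual_def inner_add_left vec_eq_iff algebra_simps)

text \<open>The invariant \<open>2 q \<le> -A\<^sub>u\<^sub>v p\<close> is where \<open>A\<^sub>u\<^sub>v A\<^sub>v\<^sub>u \<ge> 4\<close> enters: it makes the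
  coefficients of an alternating product of the two reflections grow.\<close>
lemma rho_word_dual_alternating:
  assumes "u \<noteq> v" "\<not> E u v" "set b \<subseteq> {u, v}" "successively (\<noteq>) (u # b)"
    and "0 \<le> p" "0 \<le> q" "2 * q \<le> - A$u$v * p"
  shows "\<exists>p' q'. 0 \<le> p' \<and> 0 \<le> q' \<and> p + q \<le> p' + q' \<and>
           rho_word_dual A b (p *\<^sub>R axis u 1 + q *\<^sub>R axis v 1) = p' *\<^sub>R axis u 1 + q' *\<^sub>R axis v 1"
  using assms
proof (induction b arbitrary: u v p q)
  case Nil
  then show ?case by auto
next
  case (Cons c b)
  then have c: "c = v" by auto
  define q' where "q' = - A$u$v * p - q"
  have neg: "A$u$v < 0" "A$v$u < 0"
    using cartan_neg Cons.prems(1,2) commute_sym by metis+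
  have "4 * p \<le> (A$u$v * A$v$u) * p"
    using cartan_prod_ge[OF Cons.prems(1,2)] Cons.prems(5) by (rule mult_right_mono)
  moreover have "(- A$v$u) * (2 * q) \<le> (- A$v$u) * (- A$u$v * p)"
    using Cons.prems(7) neg by (intro mult_left_mono) auto
  ultimately have inv: "2 * p \<le> - A$v$u * q'"
    unfolding q'_def by (simp add: algebra_simps)
  have "q \<le> q'" using Cons.prems(7) Cons.prems(6) by (simp add: q'_def)
  moreover have "successively (\<noteq>) (v # b)" using Cons.prems(4) c by simp
  ultimately obtain p'' q'' where IH: "0 \<le> p''" "0 \<le> q''" "q' + p \<le> p'' + q''"
      "rho_word_dual A b (q' *\<^sub>R axis v 1 + p *\<^sub>R axis u 1) = p'' *\<^sub>R axis v 1 + q'' *\<^sub>R axis u 1"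
    using Cons.IH[of v u q' p] Cons.prems inv commute_sym by (auto simp: insert_commute)
  have "rho_word_dual A (c # b) (p *\<^sub>R axis u 1 + q *\<^sub>R axis v 1)
      = q'' *\<^sub>R axis u 1 + p'' *\<^sub>R axis v 1"
    using IH(4) rho_gen_dual_rank2[OF Cons.prems(1)] c by (simp add: q'_def add.commute)
  then show ?case using IH \<open>q \<le> q'\<close> by (intro exI[of _ q''] exI[of _ p'']) auto
qed

lemma root_rank2:
  assumes "s \<noteq> t" "set a \<subseteq> {s, t}" "reduced E (a @ [s])"
  obtains x y where "0 \<le> x" "0 \<le> y" "root a s = x *\<^sub>R axis s 1 + y *\<^sub>R axis t 1"
proof (cases "E s t")
  case True
  have alternating: "successively (\<noteq>) (a @ [s])" by (rule reduced_successively[OF assms(3)])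
  have "a = [] \<or> a = [t]"
  proof (rule ccontr)
    assume a: "\<not> ?thesis"
    then obtain a' x where a': "a = a' @ [x]" by (cases a rule: rev_exhaust) auto
    then have "x = t" using alternating assms(2) by (auto simp: successively_append_iff)
    then obtain p y where p: "a' = p @ [y]" using a a' by (cases a' rule: rev_exhaust) auto
    then have "y = s"
      using alternating assms(2) a' \<open>x = t\<close> by (auto simp: successively_append_iff)
    have "ceq E (p @ [s, t] @ [s]) (p @ [t, s] @ [s])" by (rule ceq_swap[of E, OF True])
    also have "ceq E (p @ [t, s] @ [s]) (p @ [t])"
      using ceq_snoc_snoc[of E "p @ [t]" s] by simp
    finally show False
      using reduced_not_ceq_shorter[OF assms(3), of "p @ [t]"] a' p \<open>x = t\<close> \<open>y = s\<close>
      by (simp add: ceq_sym)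
  qed
  moreover have "root [t] s = axis s 1"
    using cartan_commute[OF True] by (simp add: root_def rho_gen_dual_def)
  ultimately show ?thesis using that[of 1 0] by auto
next
  case False
  have neq: "(\<lambda>x y::'n. y \<noteq> x) = (\<noteq>)" by auto
  have "successively (\<noteq>) (rev (a @ [s]))"
    unfolding successively_rev neq by (rule reduced_successively[OF assms(3)])
  then have "successively (\<noteq>) (s # rev a)" by simp
  moreover have "set (rev a) \<subseteq> {s, t}" using assms(2) by simp
  ultimately obtain p q where "0 \<le> p" "0 \<le> q"
      "rho_word_dual A (rev a) (1 *\<^sub>R axis s 1 + 0 *\<^sub>R axis t 1) = p *\<^sub>R axis s 1 + q *\<^sub>R axis t 1"
    using rho_word_dual_alternating[OF assms(1) False, of "rev a" 1 0] cartan_neg[OF assms(1) False]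
    by auto
  then show ?thesis using that by (simp add: root_def)
qed

lemma parabolic_decomposition:
  obtains v a where "set a \<subseteq> {s, t}" "ceq E w (v @ a)" "cox_len E v + length a = cox_len E w"
    "cox_len E v < cox_len E (v @ [s])" "cox_len E v < cox_len E (v @ [t])"
proof -
  define P where "P n \<longleftrightarrow> (\<exists>v a. length a = n \<and> set a \<subseteq> {s, t} \<and> ceq E w (v @ a) \<and>
                             cox_len E v + length a = cox_len E w)" for n
  have "P 0" unfolding P_def by (intro exI[of _ w] exI[of _ "[]"]) simp
  moreover have "\<forall>n. P n \<longrightarrow> n \<le> cox_len E w" unfolding P_def by auto
  ultimately obtain n where "P n" and n_max: "\<forall>m. P m \<longrightarrow> m \<le> n"
    using Nat.ex_has_greatest_nat[of P 0 "cox_len E w"] by blast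
  then obtain v a where va: "length a = n" "set a \<subseteq> {s, t}" "ceq E w (v @ a)"
      "cox_len E v + length a = cox_len E w"
    unfolding P_def by blast
  have ascent: "cox_len E v < cox_len E (v @ [u])" if "u \<in> {s, t}" for u
  proof (rule ccontr)
    assume "\<not> ?thesis"
    then have "cox_len E v = Suc (cox_len E (v @ [u]))" using cox_len_snoc[of E v u] by auto
    moreover have "ceq E w ((v @ [u]) @ (u # a))"
      using va(3) ceq_sym[OF ceq_cancel[of E v u a]] by (auto intro: ceq_trans)
    ultimately have "P (Suc n)"
      unfolding P_def using va that by (intro exI[of _ "v @ [u]"] exI[of _ "u # a"]) auto
    then show False using n_max by (metis Suc_n_not_le_n)
  qed
  show thesis using that va ascent by blast
qed

theorem tits_root_nonneg: "cox_len E w < cox_len E (w @ [s]) \<Longrightarrow> 0 \<le> root w s"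
proof (induction "cox_len E w" arbitrary: w s rule: less_induct)
  case less
  show ?case
  proof (cases "cox_len E w = 0")
    case True
    then have "root w s = axis s 1" using root_ceq ceq_Nil_if_cox_len_0 by (metis root_Nil)
    then show ?thesis by (simp add: less_eq_vec_def axis_def)
  next
    case False
    then obtain t where t: "cox_len E (w @ [t]) < cox_len E w" by (rule exists_descent)
    then have "s \<noteq> t" using less.prems by auto
    obtain v a where va: "set a \<subseteq> {s, t}" "ceq E w (v @ a)" "cox_len E v + length a = cox_len E w"
      and ascent: "cox_len E v < cox_len E (v @ [s])" "cox_len E v < cox_len E (v @ [t])"
      by (rule parabolic_decomposition)
    have "a \<noteq> []"
    proof
      assume "a = []"
      then have "cox_len E (w @ [t]) = cox_len E (v @ [t])"
        using va(2) by (simp add: cox_len_ceq ceq_append)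
      then show False using t ascent(2) va(3) \<open>a = []\<close> by simp
    qed
    then have "cox_len E v < cox_len E w" using va(3) by (cases a) auto
    then have IH: "0 \<le> root v s" "0 \<le> root v t" using less.hyps ascent by auto
    have "Suc (cox_len E w) \<le> cox_len E (v @ a @ [s])"
      using less.prems cox_len_ceq[OF ceq_append[OF va(2) ceq_refl[of E "[s]"]]] by simp
    also have "\<dots> \<le> cox_len E v + cox_len E (a @ [s])" by (rule cox_len_append)
    finally have "reduced E (a @ [s])"
      using va(3) cox_len_le_length[of E "a @ [s]"] unfolding reduced_def by simp
    then obtain x y where xy: "0 \<le> x" "0 \<le> y" "root a s = x *\<^sub>R axis s 1 + y *\<^sub>R axis t 1"
      using root_rank2 \<open>s \<noteq> t\<close> va(1) by blast
    have "root w s = rho_word_dual A (rev v) (x *\<^sub>R axis s 1 + y *\<^sub>R axis t 1)"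
      using root_ceq[OF va(2)] by (simp add: root_append xy(3))
    also have "\<dots> = x *\<^sub>R root v s + y *\<^sub>R root v t"
      using linear_rho_word_dual[of A "rev v"] by (simp add: linear_add linear_scale root_def)
    finally have "root w s = x *\<^sub>R root v s + y *\<^sub>R root v t" .
    then show ?thesis using IH xy(1,2) by (simp add: less_eq_vec_def)
  qed
qed

corollary tits_root_nonpos: "cox_len E (w @ [s]) < cox_len E w \<Longrightarrow> root w s \<le> 0"
  using tits_root_nonneg[of "w @ [s]" s] cox_len_ceq[OF ceq_snoc_snoc[of E w s]]
  by (simp add: root_snoc_self)

lemma root_nonneg_or_nonpos: "is_root f \<Longrightarrow> 0 \<le> f \<or> f \<le> 0"
  unfolding is_root_def using tits_root_nonneg tits_root_nonpos cox_len_snoc by (metis lessI)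

lemma alternating_root:
  assumes "s \<noteq> t" "\<not> E s t"
  obtains a b where "0 \<le> a" "0 \<le> b" "1 \<le> a + b"
    "root (rev (alternating_word s t k)) (if even k then s else t) = a *\<^sub>R axis s 1 + b *\<^sub>R axis t 1"
proof -
  define x where "x = (if even k then s else t)"
  define y where "y = (if even k then t else s)"
  have xy: "x \<noteq> y" "\<not> E x y" "{x, y} = {s, t}"
    using assms commute_sym by (auto simp: x_def y_def)
  have "successively (\<noteq>) (x # alternating_word s t k)"
    using successively_alternating_word[OF assms(1), of "Suc k"] by (simp add: x_def)
  then obtain p q where pq: "0 \<le> p" "0 \<le> q" "1 \<le> p + q"
      "root (rev (alternating_word s t k)) x = p *\<^sub>R axis x 1 + q *\<^sub>R axis y 1"
    using rho_word_dual_alternating[OF xy(1,2), of "alternating_word s t k" 1 0]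
      set_alternating_word[of s t k] xy(3) cartan_neg[OF xy(1,2)] by (auto simp: root_def)
  show thesis
  proof (cases "even k")
    case True
    then show thesis using that[of p q] pq by (simp add: x_def y_def)
  next
    case False
    then show thesis using that[of q p] pq by (simp add: x_def y_def add.commute)
  qed
qed

section \<open>The Tits cone\<close>

definition tits_cone :: "(real^'n) set" where
  "tits_cone = (\<Union>w. rho_word A w ` fund_chamber)"

text \<open>The walls separating \<open>x\<close> from the fundamental chamber, as rays of positive roots.\<close>
definition separating_roots :: "real^'n \<Rightarrow> (real^'n) set" where
  "separating_roots x = {normalized f | f. is_root f \<and> 0 \<le> f \<and> 0 < f \<bullet> x}"

lemma is_root_axis: "is_root (axis s 1)"
  unfolding is_root_def by (metis root_Nil)

lemma is_root_rho_gen_dual: "is_root f \<Longrightarrow> is_root (rho_gen_dual A s f)"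
  unfolding is_root_def root_def by (metis rev.simps(2) rho_word_dual.simps rho_word_dual_append)

lemma is_root_nonzero: "is_root f \<Longrightarrow> f \<noteq> 0"
  by (auto simp: is_root_def root_nonzero)

lemma separating_roots_fund_chamber: "c \<in> fund_chamber \<Longrightarrow> separating_roots c = {}"
  unfolding separating_roots_def mem_fund_chamber using inner_nonneg_nonpos_vec by (auto simp: not_less)

lemma separating_roots_rho_gen:
  "separating_roots (rho_gen A s x)
     \<subseteq> insert (axis s 1) ((\<lambda>f. normalized (rho_gen_dual A s f)) ` separating_roots x)"
proof
  fix v assume "v \<in> separating_roots (rho_gen A s x)"
  then obtain f where f: "v = normalized f" "is_root f" "0 \<le> f" "0 < f \<bullet> rho_gen A s x"
    unfolding separating_roots_def by blast
  define g where "g = rho_gen_dual A s f"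
  have g: "is_root g" "0 < g \<bullet> x"
    using f by (auto simp: g_def is_root_rho_gen_dual inner_rho_gen_dual)
  show "v \<in> insert (axis s 1) ((\<lambda>f. normalized (rho_gen_dual A s f)) ` separating_roots x)"
  proof (cases "0 \<le> g")
    case True
    have S: "0 < (\<Sum>i\<in>UNIV. g$i)" using sum_pos_if_nonneg_nonzero[OF True is_root_nonzero[OF g(1)]] .
    have "rho_gen_dual A s (normalized g) = inverse (\<Sum>i\<in>UNIV. g$i) *\<^sub>R f"
      using linear_scale[OF linear_rho_word_dual[of A "[s]"]] by (simp add: normalized_def g_def)
    then have "v = normalized (rho_gen_dual A s (normalized g))"
      using S by (simp add: normalized_scaleR f(1))
    moreover have "normalized g \<in> separating_roots x"
      unfolding separating_roots_def using g True by blast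
    ultimately show ?thesis by blast
  next
    case False
    then have "g \<le> 0" using root_nonneg_or_nonpos g(1) by blast
    have "f$k = 0" if "k \<noteq> s" for k
    proof -
      have "g$k = f$k" using that by (simp add: g_def rho_gen_dual_component)
      then show ?thesis using \<open>g \<le> 0\<close> f(3) unfolding less_eq_vec_def by (metis antisym zero_index)
    qed
    then have f_axis: "f = f$s *\<^sub>R axis s 1" by (auto simp: vec_eq_iff axis_def)
    then have "f$s \<noteq> 0" using is_root_nonzero[OF f(2)] by (metis scale_zero_left)
    then have "v = axis s 1" using f(1) f_axis normalized_scaleR by (metis normalized_axis)
    then show ?thesis by simp
  qed
qed

lemma axis_notin_separating_roots_rho_gen:
  assumes "0 < x$s"
  shows "axis s 1 \<notin> separating_roots (rho_gen A s x)"
proof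
  assume "axis s 1 \<in> separating_roots (rho_gen A s x)"
  then obtain f where f: "axis s 1 = normalized f" "is_root f" "0 \<le> f" "0 < f \<bullet> rho_gen A s x"
    unfolding separating_roots_def by blast
  define S where "S = (\<Sum>i\<in>UNIV. f$i)"
  have "0 < S" unfolding S_def using sum_pos_if_nonneg_nonzero f(3) is_root_nonzero[OF f(2)] .
  then have "f = S *\<^sub>R axis s 1" using f(1) by (simp add: normalized_def S_def)
  then have "f \<bullet> rho_gen A s x = - (S * x$s)" by (simp add: rho_gen_component)
  moreover have "0 < S * x$s" using \<open>0 < S\<close> assms by simp
  ultimately show False using f(4) by linarith
qed

lemma axis_in_separating_roots: "0 < x$s \<Longrightarrow> axis s 1 \<in> separating_roots x"
proof -
  assume "0 < x$s"
  moreover have "0 \<le> axis s (1::real)" by (simp add: less_eq_vec_def axis_def)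
  ultimately show ?thesis
    unfolding separating_roots_def using is_root_axis normalized_axis by force
qed

lemma finite_separating_roots: "x \<in> tits_cone \<Longrightarrow> finite (separating_roots x)"
proof -
  assume "x \<in> tits_cone"
  then obtain w c where x: "x = rho_word A w c" "c \<in> fund_chamber" unfolding tits_cone_def by blast
  have "finite (separating_roots (rho_word A w c))"
  proof (induction w)
    case Nil then show ?case using separating_roots_fund_chamber[OF x(2)] by simp
  next
    case (Cons a w)
    then show ?case
      using separating_roots_rho_gen[of a "rho_word A w c"] by (auto intro: finite_subset)
  qed
  then show ?thesis using x by simp
qed

lemma tits_cone_if_finite_separating_roots:
  "finite (separating_roots x) \<Longrightarrow> x \<in> tits_cone"
proof (induction "card (separating_roots x)" arbitrary: x rule: less_induct)
  case less
  show ?case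
  proof (cases "x \<le> 0")
    case True
    then have "x \<in> rho_word A [] ` fund_chamber" by (simp add: mem_fund_chamber)
    then show ?thesis unfolding tits_cone_def by blast
  next
    case False
    then obtain s where xs: "0 < x$s" by (auto simp: less_eq_vec_def not_le)
    define y where "y = rho_gen A s x"
    define F where "F = (\<lambda>f. normalized (rho_gen_dual A s f))"
    have F_axis: "F (axis s 1) = axis s 1"
      unfolding F_def using normalized_scaleR[of "-1" "axis s 1"] by simp
    have sub: "separating_roots y \<subseteq> F ` (separating_roots x - {axis s 1})"
    proof
      fix v assume v: "v \<in> separating_roots y"
      then have "v \<noteq> axis s 1" using axis_notin_separating_roots_rho_gen[OF xs] y_def by blast
      moreover obtain u where "u \<in> separating_roots x" "v = F u"
        using v separating_roots_rho_gen[of s x] calculation unfolding y_def F_def by blast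
      ultimately show "v \<in> F ` (separating_roots x - {axis s 1})" using F_axis by blast
    qed
    have fin: "finite (F ` (separating_roots x - {axis s 1}))" using less.prems by simp
    have "card (separating_roots y) \<le> card (F ` (separating_roots x - {axis s 1}))"
      by (rule card_mono[OF fin sub])
    also have "\<dots> \<le> card (separating_roots x - {axis s 1})"
      by (rule card_image_le) (use less.prems in simp)
    also have "\<dots> < card (separating_roots x)"
      by (rule card_Diff1_less[OF less.prems axis_in_separating_roots[OF xs]])
    finally have "y \<in> tits_cone"
      using less.hyps finite_subset[OF sub fin] unfolding y_def by simp
    then obtain w c where yw: "y = rho_word A w c" and c: "c \<in> fund_chamber"
      unfolding tits_cone_def by blast
    have "x = rho_gen A s y" by (simp add: y_def)
    also have "\<dots> = rho_word A (s # w) c" by (simp add: yw)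
    finally have "x = rho_word A (s # w) c" .
    then show ?thesis unfolding tits_cone_def using c by blast
  qed
qed

lemma tits_cone_iff_finite_separating_roots: "x \<in> tits_cone \<longleftrightarrow> finite (separating_roots x)"
  using finite_separating_roots tits_cone_if_finite_separating_roots by blast

lemma convex_tits_cone: "convex tits_cone"
  unfolding convex_def
proof (intro ballI allI impI)
  fix x y and u v :: real
  assume xy: "x \<in> tits_cone" "y \<in> tits_cone" and uv: "0 \<le> u" "0 \<le> v" "u + v = 1"
  have "separating_roots (u *\<^sub>R x + v *\<^sub>R y) \<subseteq> separating_roots x \<union> separating_roots y"
  proof
    fix z assume "z \<in> separating_roots (u *\<^sub>R x + v *\<^sub>R y)"
    then obtain f where f: "z = normalized f" "is_root f" "0 \<le> f" "0 < f \<bullet> (u *\<^sub>R x + v *\<^sub>R y)"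
      unfolding separating_roots_def by blast
    have "0 < f \<bullet> x \<or> 0 < f \<bullet> y"
    proof (rule ccontr)
      assume "\<not> ?thesis"
      then have "u * (f \<bullet> x) \<le> 0" "v * (f \<bullet> y) \<le> 0"
        using uv by (auto intro: mult_nonneg_nonpos)
      then show False using f(4) by (simp add: inner_add_right)
    qed
    then show "z \<in> separating_roots x \<union> separating_roots y"
      unfolding separating_roots_def using f by blast
  qed
  then show "u *\<^sub>R x + v *\<^sub>R y \<in> tits_cone"
    using xy tits_cone_iff_finite_separating_roots by (meson finite_Un finite_subset)
qed

lemma rho_word_tits_cone: "x \<in> tits_cone \<Longrightarrow> rho_word A w x \<in> tits_cone"
proof -
  assume "x \<in> tits_cone"
  then obtain v c where "x = rho_word A v c" "c \<in> fund_chamber" unfolding tits_cone_def by blast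
  then have "rho_word A w x \<in> rho_word A (w @ v) ` fund_chamber" by (simp add: rho_word_append)
  then show ?thesis unfolding tits_cone_def by blast
qed

lemma rho_word_image_tits_cone: "rho_word A w ` tits_cone = tits_cone"
proof
  show "tits_cone \<subseteq> rho_word A w ` tits_cone"
  proof
    fix x assume "x \<in> tits_cone"
    then have "rho_word A (rev w) x \<in> tits_cone" by (rule rho_word_tits_cone)
    then show "x \<in> rho_word A w ` tits_cone" by (rule rev_image_eqI) simp
  qed
qed (auto intro: rho_word_tits_cone)

lemma rho_word_interior_tits_cone:
  "x \<in> interior tits_cone \<Longrightarrow> rho_word A w x \<in> interior tits_cone"
  using interior_bijective_linear_image[OF linear_rho_word bij_rho_word, where S = tits_cone]
  by (metis image_eqI rho_word_image_tits_cone)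

lemma face_point_interior: "face_point s \<in> interior tits_cone"
proof -
  define N where "N = (\<Inter>k\<in>-{s}. {x. x$k < 0} \<inter> {x. x$k - x$s * A$k$s < 0})"
  have "open N" unfolding N_def
    by (intro open_INT ballI open_Int open_Collect_less continuous_intros) simp
  moreover have "face_point s \<in> N" by (simp add: N_def face_point_def)
  moreover have "N \<subseteq> tits_cone"
  proof
    fix x assume "x \<in> N"
    then have neg: "x$k < 0" "x$k - x$s * A$k$s < 0" if "k \<noteq> s" for k
      using that by (auto simp: N_def)
    show "x \<in> tits_cone"
    proof (cases "x$s \<le> 0")
      case True
      then have "x$k \<le> 0" for k using neg(1)[of k] by (cases "k = s") auto
      then have "x \<in> rho_word A [] ` fund_chamber" by (simp add: fund_chamber_def)
      then show ?thesis unfolding tits_cone_def by blast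
    next
      case False
      then have "rho_gen A s x $ k \<le> 0" for k
        using neg(2)[of k] by (cases "k = s") (auto simp: rho_gen_component)
      then have "rho_gen A s x \<in> fund_chamber" by (simp add: fund_chamber_def)
      then have "x \<in> rho_word A [s] ` fund_chamber" by (rule rev_image_eqI) simp
      then show ?thesis unfolding tits_cone_def by blast
    qed
  qed
  ultimately show ?thesis by (meson interior_maximal subsetD)
qed

text \<open>Moving \<open>c\<close> slightly towards \<open>\<alpha>\<^sub>s + \<alpha>\<^sub>t\<close> gives a point \<open>\<rho>(w) c'\<close> of the Tits cone at
  which all the roots of the infinite dihedral group generated by \<open>s, t\<close> are positive; by
  Tits' lemma each of them shortens \<open>w\<inverse>\<close> once more.\<close>
lemma zero_coordinates_commute:
  assumes c: "c \<in> fund_chamber" "c \<in> interior tits_cone"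
    and st: "s \<noteq> t" and zero: "c$s = 0" "c$t = 0"
  shows "E s t"
proof (rule ccontr)
  assume nst: "\<not> E s t"
  obtain e where "0 < e" "ball c e \<subseteq> tits_cone" using c(2) by (auto simp: mem_interior)
  define d :: "real^'n" where "d = axis s 1 + axis t 1"
  define p where "p = c + (e/4) *\<^sub>R d"
  have "norm d \<le> 2" unfolding d_def using norm_triangle_ineq[of "axis s (1::real)" "axis t 1"]
    by simp
  then have "dist c p < e" using \<open>0 < e\<close> by (simp add: p_def dist_norm)
  then have "p \<in> tits_cone" using \<open>ball c e \<subseteq> tits_cone\<close> by auto
  then obtain w c' where p: "p = rho_word A w c'" "c' \<in> fund_chamber" unfolding tits_cone_def by blast
  define u where "u = (\<lambda>k. rev w @ rev (alternating_word s t k))"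
  have descent: "cox_len E (u (Suc k)) < cox_len E (u k)" for k
  proof -
    define x where "x = (if even k then s else t)"
    obtain a b where ab: "0 \<le> a" "0 \<le> b" "1 \<le> a + b"
        "root (rev (alternating_word s t k)) x = a *\<^sub>R axis s 1 + b *\<^sub>R axis t 1"
      using alternating_root[OF st nst] unfolding x_def by blast
    have "(a *\<^sub>R axis s 1 + b *\<^sub>R axis t 1) \<bullet> p = (e/4) * (a + b)"
      using zero st by (simp add: p_def d_def inner_add_left inner_add_right axis_component)
    moreover have "0 < (e/4) * (a + b)" using ab(3) \<open>0 < e\<close> by simp
    ultimately have "0 < root (u k) x \<bullet> c'"
      using ab(4) by (simp add: u_def root_append inner_rho_word_dual p(1))
    then have "\<not> 0 \<le> root (u k) x"
      using inner_nonneg_nonpos_vec p(2) by (fastforce simp: mem_fund_chamber)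
    then have "cox_len E (u k @ [x]) < cox_len E (u k)"
      using tits_root_nonneg cox_len_snoc by (metis lessI)
    then show ?thesis by (simp add: u_def x_def)
  qed
  have "cox_len E (u k) + k \<le> cox_len E (u 0)" for k
  proof (induction k)
    case (Suc k)
    then show ?case using descent[of k] by linarith
  qed simp
  from this[of "Suc (cox_len E (u 0))"] show False by simp
qed

section \<open>Walls\<close>

lemma rho_word_reflection:
  "rho_word A (g @ [s] @ rev g) x = x - (root g s \<bullet> x) *\<^sub>R rho_word A g (\<chi> k. A$k$s)"
proof -
  have "rho_word A (g @ [s] @ rev g) x
      = rho_word A g (rho_word A (rev g) x - (root g s \<bullet> x) *\<^sub>R (\<chi> k. A$k$s))"
    by (simp add: rho_word_append rho_gen_def inner_root)
  then show ?thesis using linear_rho_word[of A g] by (simp add: linear_diff linear_scale)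
qed

lemma root_single_support:
  assumes "is_root f" and clique: "\<And>j k. j \<noteq> k \<Longrightarrow> f$j \<noteq> 0 \<Longrightarrow> f$k \<noteq> 0 \<Longrightarrow> E j k"
  obtains j where "f = f$j *\<^sub>R axis j 1"
proof -
  obtain j where j: "f$j \<noteq> 0" using is_root_nonzero[OF assms(1)] by (auto simp: vec_eq_iff)
  have "f$k = 0" if "k \<noteq> j" for k
  proof (rule ccontr)
    assume k: "f$k \<noteq> 0"
    have "(\<Sum>u\<in>UNIV - {j}. f$u * A$u$j) = 0"
      by (rule sum.neutral) (use cartan_commute clique[OF _ _ j] in fastforce)
    then have "f \<bullet> (\<chi> u. A$u$j) = f$j * A$j$j" by (simp add: inner_vec_sum sum.remove[of UNIV j])
    then have "rho_gen_dual A j f $ j = - f$j" "rho_gen_dual A j f $ k = f$k"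
      using that by (auto simp: rho_gen_dual_component)
    moreover have "0 \<le> rho_gen_dual A j f \<or> rho_gen_dual A j f \<le> 0"
      by (rule root_nonneg_or_nonpos[OF is_root_rho_gen_dual[OF assms(1)]])
    moreover have "0 \<le> f \<or> f \<le> 0" by (rule root_nonneg_or_nonpos[OF assms(1)])
    moreover have same_sign: "0 \<le> h$j * h$k" if "0 \<le> h \<or> h \<le> 0" for h :: "real^'n"
      using that by (auto simp: less_eq_vec_def intro: mult_nonneg_nonneg mult_nonpos_nonpos)
    ultimately have "0 \<le> - (f$j * f$k)" "0 \<le> f$j * f$k"
      using same_sign[of "rho_gen_dual A j f"] same_sign[of f] by auto
    then show False using j k by simp
  qed
  then show thesis using that[of j] by (auto simp: vec_eq_iff axis_component)
qed

text \<open>This is the faithfulness of \<open>\<rho>\<close> on reflections: each root \<open>(g t g\<inverse> j) \<alpha>\<^sub>s\<close> has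
  \<open>s\<close>-coordinate 1, so by Tits' lemma the word \<open>g t g\<inverse> j\<close> has no descent and is trivial.\<close>
lemma reflection_ceq_if_root_axis:
  assumes root: "root g t = l *\<^sub>R axis j 1" and "l \<noteq> 0"
  shows "ceq E (g @ [t] @ rev g) [j]"
proof -
  define q where "q = g @ [t] @ rev g"
  define u where "u = rho_word A g (\<chi> k. A$k$t)"
  have rho_q: "rho_word A q x = x - (l * x$j) *\<^sub>R u" for x
    using rho_word_reflection[of g t x] by (simp add: q_def u_def root)
  have "l * u$j = root g t \<bullet> u" by (simp add: root)
  also have "\<dots> = 2" by (simp add: u_def inner_root)
  finally have lu: "l * u$j = 2" .
  have "root (q @ [j]) s $ s = 1" for s
  proof -
    have "rev (q @ [j]) = j # q" by (simp add: q_def)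
    then have "root (q @ [j]) s $ s = rho_gen A j (rho_word A q (axis s 1)) $ s"
      using inner_root[of "q @ [j]" s "axis s 1"] by simp
    then show ?thesis using lu by (cases "s = j") (auto simp: rho_q rho_gen_component axis_component)
  qed
  then have "\<not> root (q @ [j]) s \<le> 0" for s by (metis less_eq_vec_def zero_index zero_less_one not_le)
  then have "cox_len E (q @ [j]) < cox_len E (q @ [j] @ [s])" for s
    using tits_root_nonpos cox_len_snoc by (metis append_assoc lessI)
  then have "ceq E [] (q @ [j])" by (intro ceq_Nil_if_no_descent) simp
  then have "ceq E ([] @ [j]) ((q @ [j]) @ [j])" by (rule ceq_append) simp
  then show ?thesis using ceq_snoc_snoc[of E q j] by (auto simp: q_def intro: ceq_sym ceq_trans)
qed

lemma wall_through_chamber_point: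
  assumes c: "c \<in> fund_chamber" "c \<in> interior tits_cone" and zero: "root g s \<bullet> rho_word A h c = 0"
  obtains j where "c$j = 0" "ceq E (h @ [j] @ rev h) (g @ [s] @ rev g)"
proof -
  define \<gamma> where "\<gamma> = root (rev h @ g) s"
  have "\<gamma> \<bullet> c = 0" using zero by (simp add: \<gamma>_def root_append inner_rho_word_dual)
  have support: "c$k = 0" if "\<gamma>$k \<noteq> 0" for k
  proof -
    have "0 \<le> \<gamma> \<or> 0 \<le> - \<gamma>"
      using root_nonneg_or_nonpos[of \<gamma>] by (auto simp: \<gamma>_def is_root_def neg_le_0_iff_le)
    then show ?thesis
      using inner_nonneg_nonpos_eq_0_component[of \<gamma> c k] inner_nonneg_nonpos_eq_0_component[of "- \<gamma>" c k]
        \<open>\<gamma> \<bullet> c = 0\<close> c(1) that by (auto simp: mem_fund_chamber)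
  qed
  obtain j where j: "\<gamma> = \<gamma>$j *\<^sub>R axis j 1"
    using root_single_support[of \<gamma>] zero_coordinates_commute[OF c] support
    unfolding \<gamma>_def is_root_def by blast
  then have "\<gamma>$j \<noteq> 0" using root_nonzero[of "rev h @ g" s] unfolding \<gamma>_def by force
  then have "ceq E (rev h @ (g @ [s] @ rev g) @ h) [j]"
    using reflection_ceq_if_root_axis[of "rev h @ g" s "\<gamma>$j" j] j by (simp add: \<gamma>_def)
  then show thesis using that support \<open>\<gamma>$j \<noteq> 0\<close> by (blast intro: ceq_conjugate)
qed

lemma root_nonzero_if_walls_disjoint:
  assumes r: "ceq E (g @ [s] @ rev g) r" and r': "ceq E (g' @ [s'] @ rev g') r'"
    and disjoint: "walls_disjoint E r r'"
    and y: "y \<in> interior tits_cone" "root g' s' \<bullet> y = 0"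
  shows "root g s \<bullet> y \<noteq> 0"
proof
  assume "root g s \<bullet> y = 0"
  obtain h c where c: "c \<in> fund_chamber" "y = rho_word A h c"
    using y(1) interior_subset unfolding tits_cone_def by blast
  then have "c \<in> interior tits_cone"
    using rho_word_interior_tits_cone[OF y(1), of "rev h"] by simp
  obtain j where j: "c$j = 0" "ceq E (h @ [j] @ rev h) r"
    using wall_through_chamber_point[OF c(1) \<open>c \<in> interior tits_cone\<close>, of g s h] r
      \<open>root g s \<bullet> y = 0\<close> c(2) by (blast intro: ceq_trans)
  obtain j' where j': "c$j' = 0" "ceq E (h @ [j'] @ rev h) r'"
    using wall_through_chamber_point[OF c(1) \<open>c \<in> interior tits_cone\<close>, of g' s' h] r'
      y(2) c(2) by (blast intro: ceq_trans)
  show False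
  proof (cases "j = j'")
    case True
    then show False using disjoint j(2) j'(2) unfolding walls_disjoint_def
      by (blast intro: ceq_trans ceq_sym)
  next
    case False
    then have "E j j'" using zero_coordinates_commute[OF c(1) \<open>c \<in> interior tits_cone\<close>] j j' by blast
    then show False using disjoint False j(2) j'(2)
      unfolding walls_disjoint_def walls_cross_def edge_in_wall_def by blast
  qed
qed

lemma omega_wall_subset_interior: "omega_wall A r \<subseteq> interior tits_cone"
  by (auto simp: omega_wall_def vinberg_cone_def tits_cone_def)

lemma vinberg_cone_eq_interior: "0 \<notin> interior tits_cone \<Longrightarrow> vinberg_cone A = interior tits_cone"
  by (auto simp: vinberg_cone_def tits_cone_def)

text \<open>An eigenvector of the reflection off its fixed hyperplane is a \<open>-1\<close>-eigenvector \<open>y\<close>;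
  then \<open>-y\<close> lies in the convex interior as well, and so does \<open>0\<close>.\<close>
lemma root_orthogonal_to_wall:
  assumes r: "ceq E (g @ [s] @ rev g) r" and "0 \<notin> interior tits_cone" and y: "y \<in> omega_wall A r"
  shows "root g s \<bullet> y = 0"
proof (rule ccontr)
  define b where "b = root g s \<bullet> y"
  define v where "v = rho_word A g (\<chi> k. A$k$s)"
  assume "root g s \<bullet> y \<noteq> 0"
  then have "b \<noteq> 0" by (simp add: b_def)
  obtain c where c: "rho_word A r y = c *\<^sub>R y" using y unfolding omega_wall_def by blast
  have "y - b *\<^sub>R v = c *\<^sub>R y"
    using rho_word_reflection[of g s y] rho_word_ceq[OF r] c by (simp add: b_def v_def)
  then have "root g s \<bullet> (y - b *\<^sub>R v) = c * b" by (simp add: b_def)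
  moreover have "root g s \<bullet> v = 2" by (simp add: v_def inner_root)
  ultimately have "b - 2 * b = c * b" by (simp add: inner_diff_right b_def)
  then have "(c + 1) * b = 0" by (simp add: algebra_simps)
  then have "c = -1" using \<open>b \<noteq> 0\<close> by simp
  then have "- y \<in> interior tits_cone"
    using rho_word_interior_tits_cone[of y r] y omega_wall_subset_interior c by auto
  then have "(1/2) *\<^sub>R y + (1/2) *\<^sub>R (- y) \<in> interior tits_cone"
    using y omega_wall_subset_interior
    by (intro convexD[OF convex_interior[OF convex_tits_cone]]) auto
  then show False using assms(2) by simp
qed

lemma hyperplane_subset_wall:
  assumes "ceq E (g @ [s] @ rev g) r"
  shows "{y \<in> vinberg_cone A. root g s \<bullet> y = 0} \<subseteq> omega_wall A r"
  using rho_word_reflection[of g s] rho_word_ceq[OF assms]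
  by (auto simp: omega_wall_def intro: exI[of _ 1])

lemma root_sign_on_wall:
  assumes r: "ceq E (g @ [s] @ rev g) r" and zero: "0 \<notin> interior tits_cone"
    and face: "\<gamma> \<bullet> rho_word A g (face_point s) \<le> 0"
    and transversal: "\<And>w. w \<in> interior tits_cone \<Longrightarrow> root g s \<bullet> w = 0 \<Longrightarrow> \<gamma> \<bullet> w \<noteq> 0"
    and y: "y \<in> omega_wall A r"
  shows "\<gamma> \<bullet> y \<le> 0"
proof (rule inner_sign_persists_in_hyperplane[OF convex_interior[OF convex_tits_cone] _ _ _ _ face])
  show "rho_word A g (face_point s) \<in> interior tits_cone"
    by (rule rho_word_interior_tits_cone[OF face_point_interior])
  show "root g s \<bullet> rho_word A g (face_point s) = 0"
    by (simp add: inner_root face_point_def)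
  show "y \<in> interior tits_cone" using y omega_wall_subset_interior by blast
  show "root g s \<bullet> y = 0" by (rule root_orthogonal_to_wall[OF r zero y])
qed (use transversal in blast)

section \<open>Efficient itineraries\<close>

lemma itinerary_reduced_path:
  assumes "itinerary E rs"
  obtains g ss where "length ss = length rs" "reduced E ss"
    "\<And>k. k < length rs \<Longrightarrow> ceq E ((g @ take k ss) @ [ss ! k] @ rev (g @ take k ss)) (rs ! k)"
proof -
  obtain gs ss where len: "length gs = Suc (length rs)" "length ss = length rs"
    and steps: "\<And>i. i < length rs \<Longrightarrow> ceq E (gs ! Suc i) (gs ! i @ [ss ! i]) \<and>
                                      edge_in_wall E (gs ! i) (ss ! i) (rs ! i)"
    and geodesic: "cox_len E (rev (gs ! 0) @ gs ! length rs) = length rs"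
    using assms unfolding itinerary_def by metis
  define g where "g = gs ! 0"
  have path: "ceq E (gs ! k) (g @ take k ss)" if "k \<le> length rs" for k
    using that
  proof (induction k)
    case (Suc k)
    have "ceq E (gs ! Suc k) (gs ! k @ [ss ! k])" using steps Suc.prems by simp
    also have "ceq E (gs ! k @ [ss ! k]) ((g @ take k ss) @ [ss ! k])"
      using Suc by (intro ceq_append) simp_all
    finally show ?case using Suc.prems len by (simp add: take_Suc_conv_app_nth)
  qed (simp add: g_def)
  have "ceq E (rev g @ gs ! length rs) (rev g @ g @ ss)"
    using ceq_append[OF ceq_refl path[of "length rs"]] len by simp
  also have "ceq E (rev g @ g @ ss) ss"
    using ceq_append[OF ceq_rev_append_self ceq_refl, of E g ss] by simp
  finally have "reduced E ss" using geodesic len by (simp add: reduced_def g_def cox_len_ceq)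
  moreover have "ceq E ((g @ take k ss) @ [ss ! k] @ rev (g @ take k ss)) (rs ! k)"
    if "k < length rs" for k
  proof -
    have p: "ceq E (g @ take k ss) (gs ! k)" using ceq_sym[OF path[of k]] that by simp
    have "ceq E ((g @ take k ss) @ [ss ! k] @ rev (g @ take k ss)) (gs ! k @ [ss ! k] @ rev (gs ! k))"
      by (rule ceq_append[OF p ceq_append[OF ceq_refl ceq_rev[OF p]]])
    then show ?thesis using steps[OF that] unfolding edge_in_wall_def by (blast intro: ceq_trans)
  qed
  ultimately show thesis using that len by blast
qed

lemma path_root_nonpos_on_start_chamber:
  assumes "reduced E ss" "i < length ss" "c \<le> 0"
  shows "root (g @ take i ss) (ss ! i) \<bullet> rho_word A g c \<le> 0"
proof -
  have "reduced E (take i ss)" "reduced E (take (Suc i) ss)"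
    using reduced_appendD(1)[of E _ "drop _ ss"] assms(1) by (metis append_take_drop_id)+
  then have "cox_len E (take i ss) < cox_len E (take i ss @ [ss ! i])"
    using assms(2) by (simp add: reduced_def take_Suc_conv_app_nth min_def)
  then have "0 \<le> root (take i ss) (ss ! i)" by (rule tits_root_nonneg)
  then show ?thesis
    using inner_nonneg_nonpos_vec[OF _ assms(3)] by (simp add: root_append inner_rho_word_dual)
qed

lemma path_root_nonneg_on_end_chamber:
  assumes "reduced E ss" "i < length ss" "c \<le> 0"
  shows "0 \<le> root (g @ take i ss) (ss ! i) \<bullet> rho_word A (g @ ss) c"
proof -
  define d where "d = drop (Suc i) ss"
  have drop_i: "drop i ss = ss ! i # d"
    unfolding d_def using assms(2) by (rule Cons_nth_drop_Suc[symmetric])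
  have "reduced E (drop i ss)" "reduced E d"
    unfolding d_def using reduced_appendD(2)[of E "take _ ss"] assms(1) by (metis append_take_drop_id)+
  have "cox_len E (rev (drop i ss) @ [ss ! i]) = cox_len E (rev d)"
    using cox_len_ceq[OF ceq_snoc_snoc[of E "rev d" "ss ! i"]] by (simp add: drop_i)
  also have "\<dots> < cox_len E (rev (drop i ss))"
    using \<open>reduced E (drop i ss)\<close> \<open>reduced E d\<close> cox_len_rev[of "ss ! i # d"]
    by (simp add: cox_len_rev reduced_def drop_i)
  finally have "root (rev (drop i ss)) (ss ! i) \<le> 0" by (rule tits_root_nonpos)
  have "ceq E ((g @ take i ss) @ (drop i ss @ rev (drop i ss))) ((g @ take i ss) @ [])"
    by (rule ceq_append[OF ceq_refl ceq_append_rev_self])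
  then have g_i: "ceq E (g @ take i ss) ((g @ ss) @ rev (drop i ss))"
    by (metis ceq_sym append_Nil2 append_assoc append_take_drop_id)
  have "root (g @ take i ss) (ss ! i) \<bullet> rho_word A (g @ ss) c
      = root (rev (drop i ss)) (ss ! i) \<bullet> c"
    unfolding root_ceq[OF g_i] by (simp add: root_append inner_rho_word_dual rho_word_append)
  then show ?thesis
    using inner_nonpos_nonpos_vec[OF \<open>root (rev (drop i ss)) (ss ! i) \<le> 0\<close> assms(3)] by simp
qed

lemma middle_wall_closure:
  assumes ss: "reduced E ss" "length ss = m"
    and walls: "\<And>k. k < m \<Longrightarrow> ceq E ((g @ take k ss) @ [ss ! k] @ rev (g @ take k ss)) (rs ! k)"
    and i: "0 < i" "i < m - 1"
    and disjoint: "walls_disjoint E (rs ! i) (rs ! 0)" "walls_disjoint E (rs ! i) (rs ! (m - 1))"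
  shows "proj_closure (omega_wall A (rs ! 0)) \<inter> proj_closure (omega_wall A (rs ! (m - 1)))
         \<subseteq> proj_closure (omega_wall A (rs ! i))"
proof -
  define l where "l = m - 1"
  define \<gamma> where "\<gamma> = root (g @ take i ss) (ss ! i)"
  have first: "ceq E (g @ [ss ! 0] @ rev g) (rs ! 0)"
    and last: "ceq E ((g @ take l ss) @ [ss ! l] @ rev (g @ take l ss)) (rs ! l)"
    using walls[of 0] walls[of l] i by (simp_all add: l_def)
  have transversal: "\<gamma> \<bullet> w \<noteq> 0"
    if "w \<in> interior tits_cone" "root h t \<bullet> w = 0" "ceq E (h @ [t] @ rev h) r"
      "walls_disjoint E (rs ! i) r" for w h t r
    using root_nonzero_if_walls_disjoint[OF walls[of i] that(3,4,1,2)] i by (simp add: \<gamma>_def)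
  have zero: "0 \<notin> interior tits_cone" using transversal[OF _ _ first disjoint(1), of 0] by auto
  have "\<gamma> \<bullet> y \<le> 0" if "y \<in> omega_wall A (rs ! 0)" for y
    using root_sign_on_wall[OF first zero _ _ that]
      path_root_nonpos_on_start_chamber[OF ss(1) _ face_point_nonpos] transversal first disjoint i ss(2)
    by (auto simp: \<gamma>_def)
  moreover have "- \<gamma> \<bullet> y \<le> 0" if "y \<in> omega_wall A (rs ! l)" for y
  proof (rule root_sign_on_wall[OF last zero _ _ that])
    have "g @ ss = (g @ take l ss) @ [ss ! l]"
      using i ss(2) take_Suc_conv_app_nth[of l ss] by (simp add: l_def)
    then have "rho_word A (g @ take l ss) (face_point (ss ! l)) = rho_word A (g @ ss) (face_point (ss ! l))"
      by (simp only: rho_word_append) simp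
    then show "- \<gamma> \<bullet> rho_word A (g @ take l ss) (face_point (ss ! l)) \<le> 0"
      using path_root_nonneg_on_end_chamber[OF ss(1) _ face_point_nonpos, of i g] i ss(2)
      by (simp add: \<gamma>_def)
  qed (use transversal last disjoint l_def in auto)
  ultimately have "closure (omega_wall A (rs ! 0)) \<inter> closure (omega_wall A (rs ! l))
        \<subseteq> closure {w \<in> vinberg_cone A. \<gamma> \<bullet> w = 0}"
    unfolding vinberg_cone_eq_interior[OF zero] using omega_wall_subset_interior
    by (intro closure_inter_subset_closure_hyperplane[OF convex_interior[OF convex_tits_cone]]) auto
  also have "\<dots> \<subseteq> closure (omega_wall A (rs ! i))"
    using hyperplane_subset_wall[OF walls[of i]] i by (intro closure_mono) (simp add: \<gamma>_def)
  finally show ?thesis unfolding proj_closure_def l_def by blast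
qed

end

theorem lemma5p5:
  fixes E :: "'n::finite \<Rightarrow> 'n \<Rightarrow> bool" and A :: "real^'n^'n" and rs :: "'n list list"
  assumes "racg_graph E"
    and "cartan_racg E A"
    and "efficient_itinerary E rs"
  shows "proj_closure (omega_wall A (hd rs)) \<inter> proj_closure (omega_wall A (last rs))
         = (\<Inter>r\<in>set rs. proj_closure (omega_wall A r))"
proof -
  interpret right_angled_cartan E A using assms(1,2) by unfold_locales
  have itinerary: "itinerary E rs" and efficient: "\<And>i. 0 < i \<Longrightarrow> i < length rs - 1 \<Longrightarrow>
        walls_disjoint E (rs ! i) (hd rs) \<and> walls_disjoint E (rs ! i) (last rs)"
    using assms(3) unfolding efficient_itinerary_def by auto
  then have "rs \<noteq> []" and ends: "hd rs = rs ! 0" "last rs = rs ! (length rs - 1)"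
    by (auto simp: itinerary_def hd_conv_nth last_conv_nth)
  obtain g ss where path: "length ss = length rs" "reduced E ss"
    "\<And>k. k < length rs \<Longrightarrow> ceq E ((g @ take k ss) @ [ss ! k] @ rev (g @ take k ss)) (rs ! k)"
    using itinerary_reduced_path[OF itinerary] by blast
  note middle = middle_wall_closure[OF path(2,1,3)]
  have "proj_closure (omega_wall A (hd rs)) \<inter> proj_closure (omega_wall A (last rs))
        \<subseteq> proj_closure (omega_wall A (rs ! i))" if "i < length rs" for i
  proof (cases "0 < i \<and> i < length rs - 1")
    case True
    then show ?thesis using middle[of i] efficient[of i] ends by simp
  next
    case False
    then have "i = 0 \<or> i = length rs - 1" using that by auto
    then show ?thesis using ends by auto
  qed
  then have "proj_closure (omega_wall A (hd rs)) \<inter> proj_closure (omega_wall A (last rs))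
        \<subseteq> proj_closure (omega_wall A r)" if "r \<in> set rs" for r
    using that by (metis in_set_conv_nth)
  then show ?thesis using hd_in_set[OF \<open>rs \<noteq> []\<close>] last_in_set[OF \<open>rs \<noteq> []\<close>] by blast
qed

end
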